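(* Let $0<\rho_-<\rho_+<1$, $\varphi_\pm=\log\frac{\rho_\pm}{1-\rho_\pm}$ and $\varphi_0=\max\{|\varphi_-|,|\varphi_+|\}$. Then the bottom and the top of the energy band of the competitive TASEP are $$E^-_{+\infty}=-\bar V^+-\log(1+e^{\varphi_0}),$$ $$E^+_{+\infty}=-\bar V^+ +\begin{cases}\dfrac{\varphi_-\log(1+e^{\varphi_+})-\varphi_+\log(1+e^{\varphi_-})}{\varphi_+-\varphi_-}, & \rho_-\le \tfrac12\le \rho_+,\\[2mm] -\log(1+e^{\varphi_+}), & \rho_-<\rho_+\le \tfrac12,\\[1mm] -\log(1+e^{-\varphi_-}), & \tfrac12\le \rho_-<\rho_+.\end{cases}$$
   Context: Let $s(\theta)=\theta\log\theta+(1-\theta)\log(1-\theta)$ for $\theta\in[0,1]$ (with $0\log 0=0$) and $\chi(\rho)=\rho(1-\rho)$. Let $\mathcal M$ be the set of measurable functions $\rho:[-1,1]\to[0,1]$ (a subset of $L^\infty([-1,1])$ with the weak-$*$ topology). For $\rho\in\mathcal M$ let $\mathbb S(\rho)=-\frac12\int_{-1}^1 s(\rho(x))\,dx$, and for a measurable $\varphi:[-1,1]\to\mathbb R$ let $\mathcal H(\rho,\varphi)=\frac12\int_{-1}^1\big[(1-\rho(x))\varphi(x)-\log(1+e^{\varphi(x)})\big]dx$. Let $\Phi=\{\varphi_y=\varphi_-\mathbf 1_{[-1,y)}+\varphi_+\mathbf 1_{[y,1]}:\ y\in[-1,1]\}$. Set $\bar V^+=\log\big(\min_{\rho\in[\rho_-,\rho_+]}\chi(\rho)\big)$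 and define the quasi-potential of the competitive TASEP by $V^+(\rho)=-\mathbb S(\rho)+\inf_{\varphi\in\Phi}\mathcal H(\rho,\varphi)-\bar V^+$. The bottom and top of the energy band are $E^-_{+\infty}=\inf_{\rho\in\mathcal M}\{\mathbb S(\rho)+V^+(\rho)\}$ and $E^+_{+\infty}=\sup_{\rho\in\mathcal M}\{\mathbb S(\rho)+V^+(\rho)\}$. *)

theory Defs
  imports "HOL-Analysis.Analysis"
begin

definition xlogx :: "real \<Rightarrow> real" where
  "xlogx t = (if t = 0 then 0 else t * ln t)"

definition sfun :: "real \<Rightarrow> real" where
  "sfun \<theta> = xlogx \<theta> + xlogx (1 - \<theta>)"

definition chi :: "real \<Rightarrow> real" where
  "chi r = r * (1 - r)"

definition profiles :: "(real \<Rightarrow> real) set" where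
  "profiles = {\<rho>. set_borel_measurable lebesgue {-1..1} \<rho> \<and> (\<forall>x\<in>{-1..1}. 0 \<le> \<rho> x \<and> \<rho> x \<le> 1)}"

definition entropyS :: "(real \<Rightarrow> real) \<Rightarrow> real" where
  "entropyS \<rho> = - (1/2) * (LINT x:{-1..1}|lebesgue. sfun (\<rho> x))"

definition Hfun :: "(real \<Rightarrow> real) \<Rightarrow> (real \<Rightarrow> real) \<Rightarrow> real" where
  "Hfun \<rho> \<phi> = (1/2) * (LINT x:{-1..1}|lebesgue. (1 - \<rho> x) * \<phi> x - ln (1 + exp (\<phi> x)))"

definition phiy :: "real \<Rightarrow> real \<Rightarrow> real \<Rightarrow> real \<Rightarrow> real" where
  "phiy phim phip y x = (if x < y then phim else phip)"

definition PhiSet :: "real \<Rightarrow> real \<Rightarrow> (real \<Rightarrow> real) set" where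
  "PhiSet phim phip = {phiy phim phip y | y. y \<in> {-1..1}}"

definition logit :: "real \<Rightarrow> real" where
  "logit r = ln (r / (1 - r))"

definition Vbar :: "real \<Rightarrow> real \<Rightarrow> real" where
  "Vbar rm rp = ln (Inf (chi ` {rm..rp}))"

definition Vplus :: "real \<Rightarrow> real \<Rightarrow> (real \<Rightarrow> real) \<Rightarrow> real" where
  "Vplus rm rp \<rho> = - entropyS \<rho> + Inf ((\<lambda>\<phi>. Hfun \<rho> \<phi>) ` PhiSet (logit rm) (logit rp)) - Vbar rm rp"

definition Ebot :: "real \<Rightarrow> real \<Rightarrow> real" where
  "Ebot rm rp = Inf ((\<lambda>\<rho>. entropyS \<rho> + Vplus rm rp \<rho>) ` profiles)"

definition Etop :: "real \<Rightarrow> real \<Rightarrow> real" where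
  "Etop rm rp = Sup ((\<lambda>\<rho>. entropyS \<rho> + Vplus rm rp \<rho>) ` profiles)"

end

theory Submission
  imports Defs
begin

(*
  Since V^+ contains -S, the energy S + V^+ equals G(rho) - Vbar^+ with
  G(rho) = inf_y H(rho, phi_y), and H(rho, phi) = 1/2 int h(rho x, phi x) dx for the
  density h(r, p) = (1 - r) p - log (1 + e^p), which is affine in r.  Pointwise lower
  bounds on h(., phi_-) and h(., phi_+) bound G from below, and G(rho) is at most any convex
  combination t H(rho, phi_-1) + (1 - t) H(rho, phi_1), whose integrand is almost
  everywhere t h(rho x, phi_+) + (1 - t) h(rho x, phi_-).  Both kinds of bounds are attained at constant
  profiles: rho = 0 or 1 according to the sign of the phi_+- of largest modulus for the bottom;
  rho = 1 if phi_+ <= 0, rho = 0 if phi_- >= 0, and otherwise the constant that equalises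
  h(., phi_-) and h(., phi_+), with t = -phi_- / (phi_+ - phi_-) cancelling the dependence on rho.
*)

definition hdens :: "real \<Rightarrow> real \<Rightarrow> real" where
  "hdens r p = (1 - r) * p - ln (1 + exp p)"

definition Hinf :: "real \<Rightarrow> real \<Rightarrow> (real \<Rightarrow> real) \<Rightarrow> real" where
  "Hinf a b \<rho> = Inf ((\<lambda>y. Hfun \<rho> (phiy a b y)) ` {-1..1})"

lemma Hfun_eq_hdens: "Hfun \<rho> \<phi> = (LINT x:{-1..1}|lebesgue. hdens (\<rho> x) (\<phi> x)) / 2"
  by (simp add: Hfun_def hdens_def)

lemma entropyS_plus_Vplus:
  "entropyS \<rho> + Vplus rm rp \<rho> = Hinf (logit rm) (logit rp) \<rho> - Vbar rm rp"
proof -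
  have "PhiSet (logit rm) (logit rp) = phiy (logit rm) (logit rp) ` {-1..1}"
    unfolding PhiSet_def by blast
  then show ?thesis
    by (simp add: Vplus_def Hinf_def image_image)
qed

lemma ln_one_plus_exp_eq: "ln (1 + exp p) = p + ln (1 + exp (- p :: real))"
proof -
  have "ln (1 + exp p) = ln (exp p * (1 + exp (- p)))"
    by (simp add: distrib_left exp_minus_inverse add.commute)
  also have "\<dots> = ln (exp p) + ln (1 + exp (- p))"
    by (rule ln_mult_pos) (simp_all add: add_pos_pos)
  finally show ?thesis by simp
qed

lemma hdens_ge:
  assumes "0 \<le> r" "r \<le> 1" "\<bar>p\<bar> \<le> M"
  shows "- ln (1 + exp M) \<le> hdens r p"
proof (cases "0 \<le> p")
  case True
  then have "0 \<le> (1 - r) * p" "ln (1 + exp p) \<le> ln (1 + exp M)"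
    using assms by (simp_all add: add_pos_pos)
  then show ?thesis unfolding hdens_def by linarith
next
  case False
  then have "p \<le> (1 - r) * p" "ln (1 + exp (- p)) \<le> ln (1 + exp M)"
    using assms mult_nonneg_nonpos[of r p] by (simp_all add: algebra_simps add_pos_pos)
  then show ?thesis using ln_one_plus_exp_eq[of p] unfolding hdens_def by linarith
qed

lemma hdens_abs_le:
  assumes "0 \<le> r" "r \<le> 1" "\<bar>p\<bar> \<le> M"
  shows "\<bar>hdens r p\<bar> \<le> M + ln (1 + exp M)"
proof -
  have "\<bar>(1 - r) * p\<bar> \<le> M"
    using assms mult_left_le_one_le[of "\<bar>p\<bar>" "1 - r"] by (simp add: abs_mult)
  moreover have "0 \<le> ln (1 + exp p)" "ln (1 + exp p) \<le> ln (1 + exp M)"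
    using assms by (simp_all add: add_pos_pos)
  ultimately show ?thesis unfolding hdens_def by linarith
qed

lemma profiles_const:
  assumes "0 \<le> c" "c \<le> 1"
  shows "(\<lambda>_. c) \<in> profiles"
proof -
  have "(\<lambda>x::real. indicator {-1..1} x * c) \<in> borel_measurable lebesgue"
    by (intro borel_measurable_times borel_measurable_indicator) auto
  then show ?thesis
    using assms by (simp add: profiles_def set_borel_measurable_def)
qed

lemma profiles_range: "\<rho> \<in> profiles \<Longrightarrow> x \<in> {-1..1} \<Longrightarrow> 0 \<le> \<rho> x \<and> \<rho> x \<le> 1"
  by (simp add: profiles_def)

lemma phiy_measurable [measurable]: "phiy a b y \<in> borel_measurable lebesgue"
proof -
  have "phiy a b y \<in> borel_measurable borel"
    unfolding phiy_def by measurable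
  then show ?thesis
    by (simp add: measurable_completion)
qed

lemma abs_phiy_le: "\<bar>phiy a b y x\<bar> \<le> max \<bar>a\<bar> \<bar>b\<bar>"
  by (simp add: phiy_def)

lemma set_integrable_const_Icc: "set_integrable lebesgue {a..b::real} (\<lambda>_. c :: real)"
  unfolding set_integrable_def
  by (rule integrableI_bounded_set_indicator[where B="\<bar>c\<bar>"]) (auto simp: emeasure_lborel_Icc_eq)

lemma set_integrable_hdens_phiy:
  assumes "\<rho> \<in> profiles"
  shows "set_integrable lebesgue {-1..1} (\<lambda>x. hdens (\<rho> x) (phiy a b y x))"
proof (rule set_integrable_bound)
  define M where "M = max \<bar>a\<bar> \<bar>b\<bar>"
  show "set_integrable lebesgue {-1..1::real} (\<lambda>_. M + ln (1 + exp M))"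
    by (rule set_integrable_const_Icc)
  show "AE x in lebesgue. x \<in> {-1..1} \<longrightarrow>
      norm (hdens (\<rho> x) (phiy a b y x)) \<le> norm (M + ln (1 + exp M))"
    using hdens_abs_le profiles_range[OF assms] abs_phiy_le unfolding M_def by fastforce
  \<comment> \<open>\<open>\<rho>\<close> is only measurable after restriction to \<open>[-1,1]\<close>.\<close>
  define \<rho>' where "\<rho>' = (\<lambda>x. indicator {-1..1} x * \<rho> x)"
  have [measurable]: "\<rho>' \<in> borel_measurable lebesgue"
    using assms by (simp add: profiles_def set_borel_measurable_def \<rho>'_def)
  have [measurable]: "{-1..1::real} \<in> sets lebesgue"
    by simp
  have "(\<lambda>x. indicator {-1..1} x * hdens (\<rho>' x) (phiy a b y x)) \<in> borel_measurable lebesgue"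
    unfolding hdens_def by measurable
  then show "set_borel_measurable lebesgue {-1..1} (\<lambda>x. hdens (\<rho> x) (phiy a b y x))"
    unfolding set_borel_measurable_def
    by (rule measurable_cong[THEN iffD1, rotated]) (simp add: \<rho>'_def indicator_def)
qed

lemma Hfun_phiy_ge:
  assumes "\<rho> \<in> profiles" and ge: "\<And>x. x \<in> {-1..1} \<Longrightarrow> m \<le> hdens (\<rho> x) a \<and> m \<le> hdens (\<rho> x) b"
  shows "m \<le> Hfun \<rho> (phiy a b y)"
proof -
  have "(LINT x:{-1..1::real}|lebesgue. m) \<le> (LINT x:{-1..1}|lebesgue. hdens (\<rho> x) (phiy a b y x))"
    by (rule set_integral_mono[OF set_integrable_const_Icc set_integrable_hdens_phiy[OF assms(1)]])
      (simp add: phiy_def ge)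
  then show ?thesis
    by (simp add: Hfun_eq_hdens set_integral_const)
qed

lemma Hinf_ge:
  assumes "\<rho> \<in> profiles" "\<And>x. x \<in> {-1..1} \<Longrightarrow> m \<le> hdens (\<rho> x) a \<and> m \<le> hdens (\<rho> x) b"
  shows "m \<le> Hinf a b \<rho>"
  unfolding Hinf_def using Hfun_phiy_ge[OF assms] by (intro cInf_greatest) auto

lemma bdd_below_Hfun_phiy:
  assumes "\<rho> \<in> profiles"
  shows "bdd_below ((\<lambda>y. Hfun \<rho> (phiy a b y)) ` {-1..1})"
proof (rule bdd_belowI2)
  fix y
  show "- ln (1 + exp (max \<bar>a\<bar> \<bar>b\<bar>)) \<le> Hfun \<rho> (phiy a b y)"
    using profiles_range[OF assms] by (intro Hfun_phiy_ge assms hdens_ge conjI) auto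
qed

lemma Hinf_le:
  assumes \<rho>: "\<rho> \<in> profiles" and "0 \<le> t" "t \<le> 1"
    and le: "\<And>x. x \<in> {-1..1} \<Longrightarrow> t * hdens (\<rho> x) b + (1 - t) * hdens (\<rho> x) a \<le> v"
  shows "Hinf a b \<rho> \<le> v"
proof -
  define f where "f y x = hdens (\<rho> x) (phiy a b y x)" for y x
  have int: "set_integrable lebesgue {-1..1} (f y)" for y
    unfolding f_def using \<rho> by (rule set_integrable_hdens_phiy)
  have "Hinf a b \<rho> \<le> Hfun \<rho> (phiy a b y)" if "y \<in> {-1..1}" for y
    unfolding Hinf_def using bdd_below_Hfun_phiy[OF \<rho>] that by (auto intro: cInf_lower)
  then have "t * Hinf a b \<rho> \<le> t * Hfun \<rho> (phiy a b (-1))"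
    and "(1 - t) * Hinf a b \<rho> \<le> (1 - t) * Hfun \<rho> (phiy a b 1)"
    using \<open>0 \<le> t\<close> \<open>t \<le> 1\<close> by (simp_all add: mult_left_mono)
  then have "Hinf a b \<rho> \<le> t * Hfun \<rho> (phiy a b (-1)) + (1 - t) * Hfun \<rho> (phiy a b 1)"
    by (simp add: algebra_simps)
  also have "\<dots> = (LINT x:{-1..1}|lebesgue. t * f (-1) x + (1 - t) * f 1 x) / 2"
  proof -
    have "(LINT x:{-1..1}|lebesgue. t * f (-1) x + (1 - t) * f 1 x)
        = t * (LINT x:{-1..1}|lebesgue. f (-1) x) + (1 - t) * (LINT x:{-1..1}|lebesgue. f 1 x)"
      using int by simp
    then show ?thesis
      by (simp add: Hfun_eq_hdens f_def)
  qed
  also have "\<dots> \<le> (LINT x:{-1..1::real}|lebesgue. v) / 2"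
  proof -
    have "AE x in lebesgue. (x::real) \<noteq> 1"
      by (simp add: AE_completion AE_lborel_singleton)
    \<comment> \<open>\<open>phiy a b 1\<close> takes the value \<open>a\<close> on \<open>[-1,1)\<close>, but \<open>b\<close> at the endpoint \<open>1\<close>.\<close>
    then have "AE x \<in> {-1..1} in lebesgue. t * f (-1) x + (1 - t) * f 1 x \<le> v"
      by eventually_elim (use le in \<open>auto simp: f_def phiy_def\<close>)
    then show ?thesis
      using int by (intro divide_right_mono set_integral_mono_AE set_integrable_const_Icc) auto
  qed
  also have "\<dots> = v"
    by (simp add: set_integral_const)
  finally show ?thesis .
qed

lemma Hinf_const:
  assumes "0 \<le> c" "c \<le> 1"
  shows "Hinf a b (\<lambda>_. c) = min (hdens c a) (hdens c b)"
proof (rule antisym)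
  show "Hinf a b (\<lambda>_. c) \<le> min (hdens c a) (hdens c b)"
    using Hinf_le[OF profiles_const[OF assms], where t=0] Hinf_le[OF profiles_const[OF assms], where t=1]
    by simp
  show "min (hdens c a) (hdens c b) \<le> Hinf a b (\<lambda>_. c)"
    by (intro Hinf_ge profiles_const assms) simp
qed

lemma hdens_extremal: "hdens (if 0 \<le> p then 1 else 0) p = - ln (1 + exp \<bar>p\<bar>)"
  using ln_one_plus_exp_eq[of p] by (simp add: hdens_def)

lemma Hinf_ge_max_abs:
  assumes "\<rho> \<in> profiles"
  shows "- ln (1 + exp (max \<bar>a\<bar> \<bar>b\<bar>)) \<le> Hinf a b \<rho>"
  using profiles_range[OF assms] by (intro Hinf_ge assms hdens_ge conjI) auto

lemma Hinf_const_max_abs: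
  obtains c where "0 \<le> c" "c \<le> 1" "Hinf a b (\<lambda>_. c) = - ln (1 + exp (max \<bar>a\<bar> \<bar>b\<bar>))"
proof -
  define p where "p = (if \<bar>a\<bar> \<le> \<bar>b\<bar> then b else a)"
  define c :: real where "c = (if 0 \<le> p then 1 else 0)"
  have "0 \<le> c" "c \<le> 1"
    by (simp_all add: c_def)
  moreover have "hdens c p = - ln (1 + exp (max \<bar>a\<bar> \<bar>b\<bar>))"
    unfolding c_def hdens_extremal by (simp add: p_def max_def)
  moreover have "- ln (1 + exp (max \<bar>a\<bar> \<bar>b\<bar>)) \<le> Hinf a b (\<lambda>_. c)"
    using calculation by (intro Hinf_ge_max_abs profiles_const)
  ultimately show ?thesis
    using that Hinf_const[of c a b] by (force simp: p_def split: if_splits)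
qed

lemma hdens_straddle_comb:
  assumes "a < b"
  shows "- a / (b - a) * hdens r b + b / (b - a) * hdens r a
    = (a * ln (1 + exp b) - b * ln (1 + exp a)) / (b - a)"
proof -
  have "- a * hdens r b + b * hdens r a = a * ln (1 + exp b) - b * ln (1 + exp a)"
    by (simp add: hdens_def algebra_simps)
  then show ?thesis
    by (metis add_divide_distrib times_divide_eq_left)
qed

lemma Hinf_le_straddle:
  assumes "\<rho> \<in> profiles" "a < b" "a \<le> 0" "0 \<le> b"
  shows "Hinf a b \<rho> \<le> (a * ln (1 + exp b) - b * ln (1 + exp a)) / (b - a)"
proof (rule Hinf_le[where t="- a / (b - a)"])
  have "1 - - a / (b - a) = b / (b - a)"
    using assms(2) by (simp add: field_simps)
  then show "- a / (b - a) * hdens (\<rho> x) b + (1 - - a / (b - a)) * hdens (\<rho> x) a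
      \<le> (a * ln (1 + exp b) - b * ln (1 + exp a)) / (b - a)" for x
    using hdens_straddle_comb[OF assms(2)] by simp
qed (use assms in \<open>auto simp: field_simps\<close>)

lemma Hinf_const_straddle:
  assumes "a < b"
  obtains c where "0 \<le> c" "c \<le> 1"
    "Hinf a b (\<lambda>_. c) = (a * ln (1 + exp b) - b * ln (1 + exp a)) / (b - a)"
proof -
  define c where "c = 1 - (ln (1 + exp b) - ln (1 + exp a)) / (b - a)"
  have "ln (1 + exp a) \<le> ln (1 + exp b)" "ln (1 + exp (- b)) \<le> ln (1 + exp (- a))"
    using assms by (simp_all add: add_pos_pos)
  then have "0 \<le> c" "c \<le> 1"
    using assms ln_one_plus_exp_eq[of a] ln_one_plus_exp_eq[of b] by (simp_all add: c_def field_simps)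
  moreover have "hdens c a = (a * ln (1 + exp b) - b * ln (1 + exp a)) / (b - a)"
    and "hdens c b = (a * ln (1 + exp b) - b * ln (1 + exp a)) / (b - a)"
    using assms by (simp_all add: c_def hdens_def field_simps)
  ultimately show ?thesis
    using that Hinf_const by simp
qed

lemma Hinf_le_nonpos:
  assumes "\<rho> \<in> profiles" "b \<le> 0"
  shows "Hinf a b \<rho> \<le> - ln (1 + exp b)"
proof (rule Hinf_le[where t=1])
  fix x :: real assume "x \<in> {-1..1}"
  then show "1 * hdens (\<rho> x) b + (1 - 1) * hdens (\<rho> x) a \<le> - ln (1 + exp b)"
    using assms profiles_range[of \<rho> x] by (simp add: hdens_def mult_nonneg_nonpos)
qed (use assms in auto)

lemma Hinf_const_one:
  assumes "a \<le> b"
  shows "Hinf a b (\<lambda>_. 1) = - ln (1 + exp b)"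
  using assms by (simp add: Hinf_const hdens_def add_pos_pos)

lemma Hinf_le_nonneg:
  assumes "\<rho> \<in> profiles" "0 \<le> a"
  shows "Hinf a b \<rho> \<le> - ln (1 + exp (- a))"
proof (rule Hinf_le[where t=0])
  fix x :: real assume "x \<in> {-1..1}"
  then show "0 * hdens (\<rho> x) b + (1 - 0) * hdens (\<rho> x) a \<le> - ln (1 + exp (- a))"
    using assms profiles_range[of \<rho> x] ln_one_plus_exp_eq[of a]
    by (simp add: hdens_def algebra_simps mult_nonneg_nonneg)
qed (use assms in auto)

lemma Hinf_const_zero:
  assumes "a \<le> b"
  shows "Hinf a b (\<lambda>_. 0) = - ln (1 + exp (- a))"
  using assms ln_one_plus_exp_eq[of a] ln_one_plus_exp_eq[of b]
  by (simp add: Hinf_const hdens_def add_pos_pos)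

lemma Ebot_eq: "Ebot rm rp = - Vbar rm rp - ln (1 + exp (max \<bar>logit rm\<bar> \<bar>logit rp\<bar>))"
proof -
  obtain c where c: "0 \<le> c" "c \<le> 1"
    "Hinf (logit rm) (logit rp) (\<lambda>_. c) = - ln (1 + exp (max \<bar>logit rm\<bar> \<bar>logit rp\<bar>))"
    by (rule Hinf_const_max_abs)
  have "Inf ((\<lambda>\<rho>. Hinf (logit rm) (logit rp) \<rho> - Vbar rm rp) ` profiles)
      = - ln (1 + exp (max \<bar>logit rm\<bar> \<bar>logit rp\<bar>)) - Vbar rm rp"
  proof (rule cInf_eq_minimum)
    show "- ln (1 + exp (max \<bar>logit rm\<bar> \<bar>logit rp\<bar>)) - Vbar rm rp
        \<in> (\<lambda>\<rho>. Hinf (logit rm) (logit rp) \<rho> - Vbar rm rp) ` profiles"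
      using c profiles_const by force
  qed (auto intro: Hinf_ge_max_abs)
  then show ?thesis
    by (simp add: Ebot_def entropyS_plus_Vplus)
qed

lemma Etop_eqI:
  assumes "0 \<le> c" "c \<le> 1" "Hinf (logit rm) (logit rp) (\<lambda>_. c) = m"
    and "\<And>\<rho>. \<rho> \<in> profiles \<Longrightarrow> Hinf (logit rm) (logit rp) \<rho> \<le> m"
  shows "Etop rm rp = - Vbar rm rp + m"
proof -
  have "Sup ((\<lambda>\<rho>. Hinf (logit rm) (logit rp) \<rho> - Vbar rm rp) ` profiles) = m - Vbar rm rp"
  proof (rule cSup_eq_maximum)
    show "m - Vbar rm rp \<in> (\<lambda>\<rho>. Hinf (logit rm) (logit rp) \<rho> - Vbar rm rp) ` profiles"
      using assms(1-3) profiles_const by force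
  qed (use assms(4) in auto)
  then show ?thesis
    by (simp add: Etop_def entropyS_plus_Vplus)
qed

lemma Etop_straddle:
  assumes "logit rm < logit rp" "logit rm \<le> 0" "0 \<le> logit rp"
  shows "Etop rm rp = - Vbar rm rp +
    (logit rm * ln (1 + exp (logit rp)) - logit rp * ln (1 + exp (logit rm))) / (logit rp - logit rm)"
proof -
  obtain c where "0 \<le> c" "c \<le> 1" "Hinf (logit rm) (logit rp) (\<lambda>_. c) =
      (logit rm * ln (1 + exp (logit rp)) - logit rp * ln (1 + exp (logit rm))) / (logit rp - logit rm)"
    using assms(1) by (rule Hinf_const_straddle)
  then show ?thesis
    using assms by (intro Etop_eqI Hinf_le_straddle)
qed

lemma Etop_nonpos:
  assumes "logit rm \<le> logit rp" "logit rp \<le> 0"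
  shows "Etop rm rp = - Vbar rm rp - ln (1 + exp (logit rp))"
  using Etop_eqI[of 1] Hinf_const_one[OF assms(1)] Hinf_le_nonpos[OF _ assms(2)] by simp

lemma Etop_nonneg:
  assumes "logit rm \<le> logit rp" "0 \<le> logit rm"
  shows "Etop rm rp = - Vbar rm rp - ln (1 + exp (- logit rm))"
  using Etop_eqI[of 0] Hinf_const_zero[OF assms(1)] Hinf_le_nonneg[OF _ assms(2)] by simp

lemma logit_less:
  assumes "0 < r" "r < s" "s < 1"
  shows "logit r < logit s"
  using assms by (simp add: logit_def field_simps)

lemma logit_nonpos_iff:
  assumes "0 < r" "r < 1"
  shows "logit r \<le> 0 \<longleftrightarrow> r \<le> 1/2"
  using assms by (simp add: logit_def field_simps)

lemma logit_nonneg_iff: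
  assumes "0 < r" "r < 1"
  shows "0 \<le> logit r \<longleftrightarrow> 1/2 \<le> r"
  using assms by (simp add: logit_def field_simps)

theorem proposition2p1:
  fixes rm rp :: real
  assumes "0 < rm" "rm < rp" "rp < 1"
  defines "phim \<equiv> ln (rm / (1 - rm))" and "phip \<equiv> ln (rp / (1 - rp))"
  defines "phi0 \<equiv> max \<bar>phim\<bar> \<bar>phip\<bar>"
  shows "Ebot rm rp = - Vbar rm rp - ln (1 + exp phi0) \<and>
         Etop rm rp = - Vbar rm rp +
           (if rm \<le> 1/2 \<and> 1/2 \<le> rp then
              (phim * ln (1 + exp phip) - phip * ln (1 + exp phim)) / (phip - phim)
            else if rp \<le> 1/2 then - ln (1 + exp phip)
            else - ln (1 + exp (- phim)))"
proof (intro conjI)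
  have logits: "logit rm = phim" "logit rp = phip"
    by (simp_all add: logit_def phim_def phip_def)
  then show "Ebot rm rp = - Vbar rm rp - ln (1 + exp phi0)"
    using Ebot_eq unfolding phi0_def by metis
  have less: "phim < phip"
    using assms(1-3) logit_less logits by metis
  have sign_m: "phim \<le> 0 \<longleftrightarrow> rm \<le> 1/2" "0 \<le> phim \<longleftrightarrow> 1/2 \<le> rm"
    and sign_p: "phip \<le> 0 \<longleftrightarrow> rp \<le> 1/2" "0 \<le> phip \<longleftrightarrow> 1/2 \<le> rp"
    using assms(1-3) logit_nonpos_iff logit_nonneg_iff logits by auto
  consider (straddle) "rm \<le> 1/2 \<and> 1/2 \<le> rp" | (low) "rp < 1/2" | (high) "1/2 < rm"
    by linarith
  then show "Etop rm rp = - Vbar rm rp +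
      (if rm \<le> 1/2 \<and> 1/2 \<le> rp then
         (phim * ln (1 + exp phip) - phip * ln (1 + exp phim)) / (phip - phim)
       else if rp \<le> 1/2 then - ln (1 + exp phip)
       else - ln (1 + exp (- phim)))"
  proof cases
    case straddle
    then show ?thesis
      using Etop_straddle[of rm rp] less sign_m sign_p unfolding logits by simp
  next
    case low
    then show ?thesis
      using Etop_nonpos[of rm rp] less sign_p assms(2) unfolding logits by simp
  next
    case high
    then show ?thesis
      using Etop_nonneg[of rm rp] less sign_m assms(2) unfolding logits by simp
  qed
qed

end
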